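(* Let $M$ be a real $n\times n$ matrix and $v\in\mathbb R^n$, and suppose $\|M-vv^\top\|\le\|M\|-\epsilon\|v\|^2$. Then if $u,w$ are top unit left and right singular vectors of $M$, respectively, $\langle u,v\rangle^2\ge\epsilon\|v\|^2$ or $\langle w,v\rangle^2\ge\epsilon\|v\|^2$.
   Context: $\|\cdot\|$ is the spectral norm for matrices and Euclidean norm for vectors. *)

theory Defs
  imports "HOL-Analysis.Analysis"
begin

definition spec_norm :: "real^'n^'n \<Rightarrow> real" where
  "spec_norm M = onorm (\<lambda>x. M *v x)"

definition outer :: "real^'n \<Rightarrow> real^'n \<Rightarrow> real^'n^'n" where
  "outer v w = (\<chi> i j. v $ i * w $ j)"

definition top_singular_pair :: "real^'n^'n \<Rightarrow> real^'n \<Rightarrow> real^'n \<Rightarrow> bool" where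
  "top_singular_pair M u w \<longleftrightarrow> norm u = 1 \<and> norm w = 1 \<and>
     M *v w = spec_norm M *\<^sub>R u \<and> transpose M *v u = spec_norm M *\<^sub>R w"

end

theory Submission
  imports Defs
begin

text \<open>Testing the rank-one perturbation against the top singular pair gives
  \<open>\<langle>u, (M - v v\<^sup>T) w\<rangle> = \<parallel>M\<parallel> - \<langle>u,v\<rangle>\<langle>w,v\<rangle> \<le> \<parallel>M - v v\<^sup>T\<parallel>\<close>, so the hypothesis forces
  \<open>\<langle>u,v\<rangle>\<langle>w,v\<rangle> \<ge> \<epsilon>\<parallel>v\<parallel>\<^sup>2\<close>; a product is at most the larger of the two squares.\<close>

lemma outer_mult_vector: "outer v w *v x = (w \<bullet> x) *\<^sub>R (v::real^'n)"
  by (simp add: outer_def matrix_vector_mult_def inner_vec_def vec_eq_iff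
      sum_distrib_left mult.commute mult.left_commute)

lemma inner_matrix_vector_le_spec_norm:
  fixes A :: "real^'n^'n" and u w :: "real^'n"
  shows "u \<bullet> (A *v w) \<le> spec_norm A * norm u * norm w"
proof -
  have "u \<bullet> (A *v w) \<le> norm u * norm (A *v w)"
    by (rule norm_cauchy_schwarz)
  also have "norm (A *v w) \<le> spec_norm A * norm w"
    unfolding spec_norm_def by (rule onorm) (rule matrix_vector_mul_bounded_linear)
  then have "norm u * norm (A *v w) \<le> norm u * (spec_norm A * norm w)"
    by (simp add: mult_left_mono)
  finally show ?thesis
    by (simp add: mult.commute mult.left_commute)
qed

lemma top_singular_pair_inner:
  assumes "top_singular_pair M u w"
  shows "u \<bullet> (M *v w) = spec_norm M"
  using assms by (simp add: top_singular_pair_def dot_square_norm)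

lemma le_mult_imp_le_square:
  fixes a b c :: real
  assumes "c \<le> a * b"
  shows "c \<le> a\<^sup>2 \<or> c \<le> b\<^sup>2"
proof -
  have "2 * (a * b) \<le> a\<^sup>2 + b\<^sup>2"
    using sum_squares_bound[of a b] by (simp add: power2_eq_square)
  with assms show ?thesis
    by linarith
qed

theorem mainTheorem14:
  fixes M :: "real^'n^'n" and v u w :: "real^'n" and \<epsilon> :: real
  assumes "spec_norm (M - outer v v) \<le> spec_norm M - \<epsilon> * (norm v)^2"
    and "top_singular_pair M u w"
  shows "(u \<bullet> v)^2 \<ge> \<epsilon> * (norm v)^2 \<or> (w \<bullet> v)^2 \<ge> \<epsilon> * (norm v)^2"
proof -
  have unit: "norm u = 1" "norm w = 1"
    using assms(2) by (auto simp: top_singular_pair_def)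
  have "u \<bullet> ((M - outer v v) *v w) = spec_norm M - (u \<bullet> v) * (w \<bullet> v)"
    using top_singular_pair_inner[OF assms(2)]
    by (simp add: matrix_vector_mult_diff_rdistrib outer_mult_vector inner_diff_right
        inner_commute)
  moreover have "u \<bullet> ((M - outer v v) *v w) \<le> spec_norm (M - outer v v)"
    using inner_matrix_vector_le_spec_norm[of u "M - outer v v" w] unit by simp
  ultimately have "\<epsilon> * (norm v)^2 \<le> (u \<bullet> v) * (w \<bullet> v)"
    using assms(1) by simp
  then show ?thesis
    using le_mult_imp_le_square by blast
qed

end
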